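(* Let $L\subseteq\Sigma^*$ be a regular language with $\kappa(L)=n\ge 2$. Then: 1. $\kappa({}_{\le}L)\le n$; 2. $\kappa({}_{\preceq}L)\le 2^n-1$ if $\emptyset$ is not a quotient of $L$, and $\kappa({}_{\preceq}L)\le 2^{n-1}$ if $\emptyset$ is a quotient of $L$; 3. $\kappa({}_{\sqsubseteq}L)\le 2^{n-1}$; 4. $\kappa({}_{\Subset}L)\le 2^{n-2}+1$. Moreover, the bounds are tight. For every $n\ge 2$ and every alphabet with $|\Sigma|\ge 2$: - there is a regular $L$ over $\Sigma$ with $\kappa(L)=n$ and $\kappa({}_{\le}L)=n$; - there is a regular $L$ over $\Sigma$ with $\kappa(L)=n$, without $\emptyset$ as a quotient, and with $\kappa({}_{\preceq}L)=2^n-1$; - there is a regular $L$ over $\Sigma$ with $\kappa(L)=n$, with $\emptyset$ as a quotient, and with $\kappa({}_{\preceq}L)=2^{n-1}$; - there is a regular $L$ over $\Sigma$ with $\kappa(L)=n$ and $\kappa({}_{\sqsubseteq}L)=2^{n-1}$. For every $n\ge 2$ and every alphabet with $|\Sigma|\ge \max(n-2,2)$, there is a regular $L$ over $\Sigma$ with $\kappa(L)=n$ and $\kappa({}_{\Subset}L)=2^{n-2}+1$.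
   Context: $\Sigma$ is a finite non-empty alphabet. For a language $L\subseteq\Sigma^*$ and a word $w$, the (left) quotient of $L$ by $w$ is $L_w=\{x\in\Sigma^*\mid wx\in L\}$. The quotient complexity $\kappa(L)$ is the number of distinct quotients of $L$; for regular $L$ it equals the number of states of the minimal complete DFA for $L$. We say $L$ "has $\emptyset$" if $\emptyset$ is one of its quotients. A word $u$ is a prefix (suffix, factor) of $w$ if $w=ux$ ($w=xu$, $w=xuy$) for some words $x,y$. A word $a_1\cdots a_n$ with letters $a_i$ is a subword of $w$ if $w=w_0a_1w_1\cdots a_nw_n$ for some words $w_i$, i.e. a subword is a not necessarily contiguous subsequence. We write $x\le w$, $x\preceq w$, $x\sqsubseteq w$, $x\Subset w$ for "$x$ is a prefix / suffix / factor / subword of $w$", respectively. For such a relation $\unlhd$, the $\unlhd$-closure of $L$ is ${}_{\unlhd}L=\{x\in\Sigma^*\mid x\unlhd w \text{ for some } w\in L\}$. *)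

theory Defs
  imports Main "HOL-Library.Sublist"
begin

definition quot :: "'a list set \<Rightarrow> 'a list \<Rightarrow> 'a list set" where
  "quot L w = {x. w @ x \<in> L}"

definition quotients :: "'a list set \<Rightarrow> 'a list set set" where
  "quotients L = {quot L w | w. True}"

definition kappa :: "'a list set \<Rightarrow> nat" where
  "kappa L = card (quotients L)"

definition has_empty :: "'a list set \<Rightarrow> bool" where
  "has_empty L \<longleftrightarrow> {} \<in> quotients L"

definition regular :: "'a list set \<Rightarrow> bool" where
  "regular L \<longleftrightarrow> (\<exists>(Q::nat set) q0 (\<delta>::nat \<Rightarrow> 'a \<Rightarrow> nat) F.
      finite Q \<and> q0 \<in> Q \<and> (\<forall>q\<in>Q. \<forall>a. \<delta> q a \<in> Q) \<and> F \<subseteq> Q \<and>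
      L = {w. foldl \<delta> q0 w \<in> F})"

definition closure :: "('a list \<Rightarrow> 'a list \<Rightarrow> bool) \<Rightarrow> 'a list set \<Rightarrow> 'a list set" where
  "closure R L = {x. \<exists>w\<in>L. R x w}"

definition prefix_closure :: "'a list set \<Rightarrow> 'a list set" where
  "prefix_closure L = closure prefix L"
definition suffix_closure :: "'a list set \<Rightarrow> 'a list set" where
  "suffix_closure L = closure suffix L"
definition factor_closure :: "'a list set \<Rightarrow> 'a list set" where
  "factor_closure L = closure sublist L"
definition subword_closure :: "'a list set \<Rightarrow> 'a list set" where
  "subword_closure L = closure subseq L"

end

theory Submission
  imports Defs "HOL-Library.Countable_Set"
begin

text \<open>
  Upper bounds: every quotient of a closure of L is assembled from a family of quotients
  of L -- the prefix closure of one quotient, the union of the quotients by words ending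
  with x (suffix closure), the prefix closure of such a union (factor closure), or the
  subword closure of the union of the quotients by words containing x as a subword.
  Counting these families, and observing that the empty quotient never contributes to a
  union, that L itself makes the subword quotient collapse to the whole subword closure,
  and that without the empty quotient the factor and subword closures are the full
  language, gives the bounds n, 2^n - 1, 2^(n-1), 2^(n-1) and 2^(n-2) + 1.

  Tightness: languages of automata whose quotients of the suffix closure are the
  languages accepted from sets of states; two automata in which one letter rotates the
  states (a cycle and a cycle with a sink) reach every admissible set of states, and
  these sets are separated by rotations. The prefix bound is attained by the words of
  bounded length, the subword bound by words whose first letter does not reoccur.
\<close>

lemma quot_in: "quot L w \<in> quotients L"
  unfolding quotients_def by blast

lemma quotients_range: "quotients L = range (quot L)"
  unfolding quotients_def by blast

lemma quot_Nil [simp]: "quot L [] = L"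
  unfolding quot_def by simp

lemma quot_append: "quot (quot L u) v = quot L (u @ v)"
  unfolding quot_def by simp

lemma quot_quotient: "K \<in> quotients L \<Longrightarrow> quot K w \<in> quotients L"
  unfolding quotients_range by (auto simp: quot_append)

text \<open>A positive quotient complexity can only be the cardinality of a finite set.\<close>
lemma finite_quotients: "0 < kappa L \<Longrightarrow> finite (quotients L)"
  unfolding kappa_def by (rule card_ge_0_finite)

lemma kappa_le_card:
  assumes "\<And>x. quot M x \<in> X" "finite X"
  shows "kappa M \<le> card X"
  unfolding kappa_def using assms by (intro card_mono) (auto simp: quotients_range)

lemma kappa_eq_card:
  assumes "quotients M = f ` D" "inj_on f D"
  shows "kappa M = card D"
  unfolding kappa_def assms(1) using assms(2) by (rule card_image)

lemma kappa_eq_1: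
  assumes "\<And>x. quot M x = M"
  shows "kappa M = 1"
proof -
  have "quotients M = {M}" unfolding quotients_range using assms by auto
  then show ?thesis unfolding kappa_def by simp
qed

text \<open>Myhill--Nerode, easy direction: finitely many quotients give a DFA whose states are
  the quotients themselves (numbered by an injection into nat); a quotient K is accepting
  iff it contains the empty word.\<close>
lemma regular_if_finite_quotients:
  assumes fin: "finite (quotients L)"
  shows "regular L"
proof -
  let ?Qs = "quotients L"
  define e where "e = to_nat_on ?Qs"
  define \<delta> where "\<delta> q c = e (quot (from_nat_into ?Qs q) [c])" for q c
  have cnt: "countable ?Qs" using fin by (rule countable_finite)
  have run: "foldl \<delta> (e K) w = e (quot K w)" if "K \<in> ?Qs" for K w
    using that
  proof (induction w arbitrary: K)
    case (Cons c w)
    have "\<delta> (e K) c = e (quot K [c])" unfolding \<delta>_def e_def using cnt Cons.prems by simp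
    then show ?case using Cons.IH[OF quot_quotient[OF Cons.prems]] by (simp add: quot_append)
  qed simp
  have L_in: "L \<in> ?Qs" using quot_in[of L "[]"] by simp
  have closed: "\<forall>q\<in>e ` ?Qs. \<forall>c. \<delta> q c \<in> e ` ?Qs"
    using run[of _ "[_]"] quot_quotient by fastforce
  have "w \<in> L \<longleftrightarrow> foldl \<delta> (e L) w \<in> e ` {K \<in> ?Qs. [] \<in> K}" for w
  proof -
    have "foldl \<delta> (e L) w = e (quot L w)" using run[OF L_in] .
    moreover have "inj_on e ?Qs" unfolding e_def using cnt by (rule inj_on_to_nat_on)
    ultimately show ?thesis using quot_in[of L w] by (auto simp: quot_def inj_on_eq_iff)
  qed
  then have lang: "L = {w. foldl \<delta> (e L) w \<in> e ` {K \<in> ?Qs. [] \<in> K}}" by blast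
  have fin_states: "finite (e ` ?Qs)" using fin by simp
  have start: "e L \<in> e ` ?Qs" using L_in by simp
  have final: "e ` {K \<in> ?Qs. [] \<in> K} \<subseteq> e ` ?Qs" by blast
  show ?thesis
    unfolding regular_def
    by (intro exI[of _ "e ` ?Qs"] exI[of _ "e L"] exI[of _ \<delta>] exI[of _ "e ` {K \<in> ?Qs. [] \<in> K}"]
        conjI fin_states start closed final lang)
qed

section \<open>Quotients of the four closures\<close>

text \<open>The quotients of L by words ending with x, resp. by words having x as a subword.
  The quotients of the suffix and subword closures by x are built from these families.\<close>
definition ending_quotients :: "'a list set \<Rightarrow> 'a list \<Rightarrow> 'a list set set" where
  "ending_quotients L x = {quot L (u @ x) | u. True}"

definition embedding_quotients :: "'a list set \<Rightarrow> 'a list \<Rightarrow> 'a list set set" where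
  "embedding_quotients L x = {quot L w | w. subseq x w}"

lemma ending_quotients_sub: "ending_quotients L x \<subseteq> quotients L"
  unfolding ending_quotients_def using quot_in by blast

lemma embedding_quotients_sub: "embedding_quotients L x \<subseteq> quotients L"
  unfolding embedding_quotients_def using quot_in by blast

lemma quot_prefix_closure: "quot (prefix_closure L) x = prefix_closure (quot L x)"
  unfolding prefix_closure_def closure_def quot_def prefix_def by auto

lemma quot_suffix_closure: "quot (suffix_closure L) x = \<Union> (ending_quotients L x)"
  unfolding suffix_closure_def closure_def quot_def ending_quotients_def suffix_def by auto

text \<open>Factors are prefixes of suffixes, so quotients of the factor closure are
  prefix closures of quotients of the suffix closure.\<close>
lemma quot_factor_closure: "quot (factor_closure L) x = prefix_closure (quot (suffix_closure L) x)"
proof -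
  have "y \<in> quot (factor_closure L) x \<longleftrightarrow> (\<exists>u v. u @ x @ y @ v \<in> L)" for y
    unfolding factor_closure_def closure_def quot_def sublist_def by auto
  moreover have "y \<in> prefix_closure (quot (suffix_closure L) x) \<longleftrightarrow> (\<exists>u v. u @ x @ y @ v \<in> L)" for y
    unfolding suffix_closure_def prefix_closure_def closure_def quot_def suffix_def prefix_def by auto
  ultimately show ?thesis by blast
qed

text \<open>A subword x @ y of w splits as w = w1 @ w2 with x a subword of w1 and y a subword of w2.\<close>
lemma quot_subword_closure: "quot (subword_closure L) x = subword_closure (\<Union> (embedding_quotients L x))"
proof (intro set_eqI iffI)
  fix y assume "y \<in> quot (subword_closure L) x"
  then obtain w where "w \<in> L" "subseq (x @ y) w"
    unfolding subword_closure_def closure_def quot_def by auto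
  moreover from list_emb_appendD[OF this(2)] obtain w1 w2 where "w = w1 @ w2" "subseq x w1" "subseq y w2"
    by blast
  ultimately show "y \<in> subword_closure (\<Union> (embedding_quotients L x))"
    unfolding subword_closure_def closure_def embedding_quotients_def quot_def by blast
next
  fix y assume "y \<in> subword_closure (\<Union> (embedding_quotients L x))"
  then obtain w1 w2 where "w1 @ w2 \<in> L" "subseq x w1" "subseq y w2"
    unfolding subword_closure_def closure_def embedding_quotients_def quot_def by auto
  then show "y \<in> quot (subword_closure L) x"
    unfolding subword_closure_def closure_def quot_def by (auto intro: list_emb_append_mono)
qed

lemma quot_subword_closure_subset: "quot (subword_closure L) x \<subseteq> subword_closure L"
proof
  fix y assume "y \<in> quot (subword_closure L) x"
  then obtain w where "w \<in> L" "subseq (x @ y) w"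
    unfolding subword_closure_def closure_def quot_def by auto
  moreover have "subseq y (x @ y)" by (rule subseq_drop_many) simp
  ultimately show "y \<in> subword_closure L"
    unfolding subword_closure_def closure_def by (blast intro: subseq_order.order_trans)
qed

text \<open>Without the empty quotient every word can be extended into L, so the prefix closure,
  and hence the factor and subword closures, are the full language.\<close>
lemma prefix_closure_UNIV:
  assumes "\<not> has_empty L" shows "prefix_closure L = UNIV"
proof -
  have "quot L y \<noteq> {}" for y using assms quot_in unfolding has_empty_def by metis
  then show ?thesis unfolding prefix_closure_def closure_def prefix_def quot_def by auto
qed

lemma prefix_closure_subset_factor_closure: "prefix_closure L \<subseteq> factor_closure L"
  unfolding prefix_closure_def factor_closure_def closure_def by auto

lemma prefix_closure_subset_subword_closure: "prefix_closure L \<subseteq> subword_closure L"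
  unfolding prefix_closure_def subword_closure_def closure_def by auto

lemma card_quotients_nonempty:
  assumes "finite (quotients L)" "has_empty L"
  shows "card (quotients L - {{}}) = kappa L - 1"
  using assms unfolding has_empty_def kappa_def by (simp add: card_Diff_singleton)

section \<open>Upper bounds\<close>

text \<open>Each quotient of the prefix closure is the prefix closure of a quotient of L.\<close>
lemma prefix_closure_kappa_le:
  assumes "finite (quotients L)"
  shows "kappa (prefix_closure L) \<le> kappa L"
proof -
  have "kappa (prefix_closure L) \<le> card (prefix_closure ` quotients L)"
    using assms by (intro kappa_le_card) (auto simp: quot_prefix_closure quot_in)
  also have "\<dots> \<le> kappa L" unfolding kappa_def using assms by (rule card_image_le)
  finally show ?thesis .
qed

text \<open>Each quotient of the suffix closure is the union of a nonempty family of quotients of L.\<close>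
lemma suffix_closure_kappa_le:
  assumes "finite (quotients L)"
  shows "kappa (suffix_closure L) \<le> 2 ^ kappa L - 1"
proof -
  let ?D = "Pow (quotients L) - {{}}"
  have "ending_quotients L x \<in> ?D" for x
    using ending_quotients_sub unfolding ending_quotients_def by auto
  then have "kappa (suffix_closure L) \<le> card (Union ` ?D)"
    using assms by (intro kappa_le_card) (auto simp: quot_suffix_closure)
  also have "\<dots> \<le> card ?D" using assms by (intro card_image_le) simp
  also have "\<dots> = 2 ^ kappa L - 1" using assms by (simp add: kappa_def card_Diff_singleton card_Pow)
  finally show ?thesis .
qed

text \<open>The empty quotient contributes nothing to such a union, so it can be discarded.\<close>
lemma quot_suffix_closure_in:
  "quot (suffix_closure L) x \<in> Union ` Pow (quotients L - {{}})"
proof -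
  have "quot (suffix_closure L) x = \<Union> (ending_quotients L x - {{}})"
    unfolding quot_suffix_closure by blast
  moreover have "ending_quotients L x - {{}} \<in> Pow (quotients L - {{}})"
    using ending_quotients_sub by blast
  ultimately show ?thesis by blast
qed

lemma suffix_closure_kappa_le_has_empty:
  assumes "finite (quotients L)" "has_empty L"
  shows "kappa (suffix_closure L) \<le> 2 ^ (kappa L - 1)"
proof -
  have "kappa (suffix_closure L) \<le> card (Union ` Pow (quotients L - {{}}))"
    using assms by (intro kappa_le_card quot_suffix_closure_in) simp
  also have "\<dots> \<le> card (Pow (quotients L - {{}}))" using assms by (intro card_image_le) simp
  also have "\<dots> = 2 ^ (kappa L - 1)" using assms by (simp add: card_Pow card_quotients_nonempty)
  finally show ?thesis .
qed

lemma factor_closure_kappa_le: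
  assumes "finite (quotients L)"
  shows "kappa (factor_closure L) \<le> 2 ^ (kappa L - 1)"
proof (cases "has_empty L")
  case True
  let ?D = "Pow (quotients L - {{}})"
  have "quot (factor_closure L) x \<in> (prefix_closure \<circ> Union) ` ?D" for x
    using quot_suffix_closure_in[of L x] unfolding quot_factor_closure by auto
  then have "kappa (factor_closure L) \<le> card ((prefix_closure \<circ> Union) ` ?D)"
    by (rule kappa_le_card) (use assms in simp)
  also have "\<dots> \<le> card ?D" using assms by (intro card_image_le) simp
  also have "\<dots> = 2 ^ (kappa L - 1)" using assms True by (simp add: card_Pow card_quotients_nonempty)
  finally show ?thesis .
next
  case False
  then have "factor_closure L = UNIV"
    using prefix_closure_UNIV prefix_closure_subset_factor_closure by blast
  then have "kappa (factor_closure L) = 1" by (intro kappa_eq_1) (simp add: quot_def)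
  then show ?thesis by simp
qed

lemma quot_subword_closure_cases:
  "quot (subword_closure L) x = subword_closure L \<or>
   quot (subword_closure L) x = subword_closure (\<Union> (embedding_quotients L x - {{}, L}))"
proof (cases "L \<in> embedding_quotients L x")
  case True
  then have "subword_closure L \<subseteq> subword_closure (\<Union> (embedding_quotients L x))"
    unfolding subword_closure_def closure_def by blast
  then have "subword_closure L \<subseteq> quot (subword_closure L) x"
    unfolding quot_subword_closure .
  then show ?thesis using quot_subword_closure_subset by blast
next
  case False
  then have "\<Union> (embedding_quotients L x) = \<Union> (embedding_quotients L x - {{}, L})" by blast
  then show ?thesis unfolding quot_subword_closure by simp
qed

lemma subword_closure_kappa_le:
  assumes "finite (quotients L)" "2 \<le> kappa L"
  shows "kappa (subword_closure L) \<le> 2 ^ (kappa L - 2) + 1"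
proof (cases "has_empty L")
  case True
  let ?D = "Pow (quotients L - {{}, L})"
  have "L \<noteq> {}"
  proof
    assume "L = {}"
    then have "kappa L = 1" by (intro kappa_eq_1) (simp add: quot_def)
    then show False using assms by simp
  qed
  moreover have "{{}, L} \<subseteq> quotients L" using True quot_in[of L "[]"] unfolding has_empty_def by simp
  ultimately have card_D: "card (quotients L - {{}, L}) = kappa L - 2"
    using assms unfolding kappa_def by (simp add: card_Diff_subset)
  have "quot (subword_closure L) x \<in> insert (subword_closure L) ((subword_closure \<circ> Union) ` ?D)" for x
    using quot_subword_closure_cases[of L x] embedding_quotients_sub[of L x] by auto
  then have "kappa (subword_closure L) \<le> card (insert (subword_closure L) ((subword_closure \<circ> Union) ` ?D))"
    by (rule kappa_le_card) (use assms in simp)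
  also have "\<dots> \<le> card ((subword_closure \<circ> Union) ` ?D) + 1" by (simp add: card_insert_le_m1)
  also have "\<dots> \<le> card ?D + 1" using assms by (simp add: card_image_le)
  also have "\<dots> = 2 ^ (kappa L - 2) + 1" using assms by (simp add: card_Pow card_D)
  finally show ?thesis .
next
  case False
  then have "subword_closure L = UNIV"
    using prefix_closure_UNIV prefix_closure_subset_subword_closure by blast
  then have "kappa (subword_closure L) = 1" by (intro kappa_eq_1) (simp add: quot_def)
  then show ?thesis by simp
qed

section \<open>Deterministic automata\<close>

definition accepts :: "('q \<Rightarrow> 'a \<Rightarrow> 'q) \<Rightarrow> 'q set \<Rightarrow> 'q set \<Rightarrow> 'a list set" where
  "accepts \<delta> F T = {w. \<exists>q\<in>T. foldl \<delta> q w \<in> F}"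

definition after :: "('q \<Rightarrow> 'a \<Rightarrow> 'q) \<Rightarrow> 'q set \<Rightarrow> 'a list \<Rightarrow> 'q set" where
  "after \<delta> T x = (\<lambda>q. foldl \<delta> q x) ` T"

lemma after_append: "after \<delta> T (x @ y) = after \<delta> (after \<delta> T x) y"
  unfolding after_def by (simp add: image_image)

lemma quot_accepts: "quot (accepts \<delta> F T) u = accepts \<delta> F (after \<delta> T u)"
  unfolding quot_def accepts_def after_def by auto

lemma quotients_accepts:
  "quotients (accepts \<delta> F {q0}) = (\<lambda>p. accepts \<delta> F {p}) ` range (foldl \<delta> q0)"
  unfolding quotients_range quot_accepts after_def by auto

lemma quot_suffix_closure_accepts:
  "quot (suffix_closure (accepts \<delta> F {q0})) x = accepts \<delta> F (after \<delta> (range (foldl \<delta> q0)) x)"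
  unfolding quot_def suffix_closure_def closure_def suffix_def accepts_def after_def
  by (auto; metis foldl_append)

lemma prefix_closure_accepts:
  "prefix_closure (accepts \<delta> F T) = accepts \<delta> {q. \<exists>v. foldl \<delta> q v \<in> F} T"
  unfolding prefix_closure_def closure_def prefix_def accepts_def
  by (auto; metis foldl_append)

lemma inj_on_separated_unions:
  assumes separated: "\<And>i. i \<in> A \<Longrightarrow> \<exists>y. \<forall>q\<in>A. P q y \<longleftrightarrow> q = i"
  shows "inj_on (\<lambda>T. {y. \<exists>q\<in>T. P q y}) (Pow A)"
proof (rule inj_onI)
  have mono: "i \<in> T'"
    if hyps: "i \<in> T" "T \<subseteq> A" "T' \<subseteq> A" "{y. \<exists>q\<in>T. P q y} = {y. \<exists>q\<in>T'. P q y}" for i T T'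
  proof -
    obtain y where y: "\<forall>q\<in>A. P q y \<longleftrightarrow> q = i" using separated hyps(1,2) by blast
    then have "y \<in> {y. \<exists>q\<in>T. P q y}" using hyps(1,2) by blast
    then obtain q where "q \<in> T'" "P q y" using hyps(4) by blast
    then show ?thesis using y hyps(3) by auto
  qed
  fix T T' assume "T \<in> Pow A" "T' \<in> Pow A" "{y. \<exists>q\<in>T. P q y} = {y. \<exists>q\<in>T'. P q y}"
  then show "T = T'" using mono[of _ T T'] mono[of _ T' T] by blast
qed

corollary inj_on_accepts:
  assumes "\<And>i. i \<in> A \<Longrightarrow> \<exists>y. \<forall>q\<in>A. foldl \<delta> q y \<in> F \<longleftrightarrow> q = i"
  shows "inj_on (accepts \<delta> F) (Pow A)"
  using inj_on_separated_unions[of A "\<lambda>q y. foldl \<delta> q y \<in> F", OF assms]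
  unfolding accepts_def by blast

text \<open>An automaton on states {0..<m} in which the letter a rotates the states cyclically
  and the letter b fixes every state except 0. Both tight examples for the suffix and
  factor closures are of this kind; they differ only in where b sends the state 0.\<close>
locale rotation =
  fixes \<delta> :: "nat \<Rightarrow> 'a \<Rightarrow> nat" and a b :: 'a and m :: nat
  assumes rotate: "q < m \<Longrightarrow> \<delta> q a = Suc q mod m"
    and b_fixes: "0 < q \<Longrightarrow> q < m \<Longrightarrow> \<delta> q b = q"
    and m_pos: "0 < m"
begin

lemma run_a: "q < m \<Longrightarrow> foldl \<delta> q (replicate k a) = (q + k) mod m"
proof (induction k arbitrary: q)
  case (Suc k)
  have "foldl \<delta> q (replicate (Suc k) a) = foldl \<delta> (Suc q mod m) (replicate k a)"
    using Suc.prems by (simp add: rotate)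
  also have "\<dots> = (Suc q mod m + k) mod m" using Suc.IH m_pos by simp
  also have "\<dots> = (q + Suc k) mod m" by (simp add: mod_add_left_eq)
  finally show ?case .
qed simp

definition home :: "nat \<Rightarrow> 'a list" where
  "home j = replicate (m - j) a"

lemma home_zero:
  assumes "q < m" "j < m"
  shows "foldl \<delta> q (home j) = 0 \<longleftrightarrow> q = j"
proof -
  have "foldl \<delta> q (home j) = (q + (m - j)) mod m" unfolding home_def using assms(1) by (rule run_a)
  also have "\<dots> = 0 \<longleftrightarrow> q = j"
  proof (cases "j \<le> q")
    case True
    then have "(q + (m - j)) mod m = q - j" using assms by (simp add: le_mod_geq)
    then show ?thesis using True by simp
  next
    case False
    then show ?thesis using assms by simp
  qed
  finally show ?thesis .
qed

text \<open>The word pulse j applies b "at state j": every state other than j is fixed, and j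
  is sent where b sends 0, followed by j rotations.\<close>
definition pulse :: "nat \<Rightarrow> 'a list" where
  "pulse j = home j @ b # replicate j a"

lemma pulse_other:
  assumes "q < m" "j < m" "q \<noteq> j"
  shows "foldl \<delta> q (pulse j) = q"
proof -
  define r where "r = (q + (m - j)) mod m"
  have run: "foldl \<delta> q (home j) = r" unfolding home_def r_def using assms(1) by (rule run_a)
  have "r < m" "r \<noteq> 0" unfolding r_def using m_pos home_zero[OF assms(1,2)] assms(3) run r_def by auto
  then have "\<delta> r b = r" by (simp add: b_fixes)
  moreover have "(r + j) mod m = q" unfolding r_def using assms by (simp add: mod_add_left_eq)
  ultimately show ?thesis unfolding pulse_def using run run_a[OF \<open>r < m\<close>] by simp
qed

lemma pulse_self: "j < m \<Longrightarrow> foldl \<delta> j (pulse j) = foldl \<delta> (\<delta> 0 b) (replicate j a)"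
  unfolding pulse_def using home_zero[of j j] by simp

text \<open>States are separated by the words home i, so accepting {0} distinguishes sets of states.\<close>
lemma inj_on_accepts_zero: "inj_on (accepts \<delta> {0}) (Pow {..<m})"
  by (rule inj_on_accepts) (use home_zero in blast)

lemma inj_on_accepts_zero_state: "inj_on (\<lambda>p. accepts \<delta> {0} {p}) {..<m}"
  using inj_on_accepts_zero by (auto simp: inj_on_def)

lemma accepts_zero_state_nonempty: "p < m \<Longrightarrow> accepts \<delta> {0} {p} \<noteq> {}"
  unfolding accepts_def using home_zero by blast

end

section \<open>Tightness for the suffix closure without the empty quotient\<close>

definition cycle_step :: "'a \<Rightarrow> nat \<Rightarrow> nat \<Rightarrow> 'a \<Rightarrow> nat" where
  "cycle_step a N q c = (if c = a then Suc q mod N else if q = 0 then 1 else q)"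

locale cycle_automaton =
  fixes a b :: 'a and N :: nat
  assumes a_ne_b: "a \<noteq> b" and two_le_N: "2 \<le> N"
begin

abbreviation "\<delta> \<equiv> cycle_step a N"

sublocale rotation \<delta> a b N
  by unfold_locales (use a_ne_b two_le_N in \<open>auto simp: cycle_step_def\<close>)

lemma run_lt: "q < N \<Longrightarrow> foldl \<delta> q w < N"
proof (induction w arbitrary: q)
  case (Cons c w)
  then show ?case using two_le_N by (simp add: cycle_step_def)
qed simp

lemma reachable: "range (foldl \<delta> 0) = {..<N}"
proof
  show "range (foldl \<delta> 0) \<subseteq> {..<N}" using run_lt m_pos by auto
  show "{..<N} \<subseteq> range (foldl \<delta> 0)"
  proof
    fix p assume "p \<in> {..<N}"
    then have "foldl \<delta> 0 (replicate p a) = p" using run_a[OF m_pos] by simp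
    then show "p \<in> range (foldl \<delta> 0)" by (metis rangeI)
  qed
qed

lemma pulse_merge:
  assumes "q < N" "j < N"
  shows "foldl \<delta> q (pulse j) = (if q = j then Suc j mod N else q)"
proof (cases "q = j")
  case True
  have "\<delta> 0 b = 1" using a_ne_b by (simp add: cycle_step_def)
  moreover have "1 < N" using two_le_N by simp
  ultimately show ?thesis using True pulse_self[OF assms(2)] run_a[of 1 j] by simp
qed (use pulse_other assms in simp)

lemma exists_gap:
  assumes "S \<subseteq> {..<N}" "S \<noteq> {}" "S \<noteq> {..<N}"
  shows "\<exists>j<N. j \<notin> S \<and> Suc j mod N \<in> S"
proof (rule ccontr)
  assume no_gap: "\<not> (\<exists>j<N. j \<notin> S \<and> Suc j mod N \<in> S)"
  obtain t where t: "t < N" "t \<notin> S" using assms by auto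
  have outside: "(t + k) mod N \<notin> S" for k
  proof (induction k)
    case (Suc k)
    have "(t + k) mod N < N" using two_le_N by simp
    then have "Suc ((t + k) mod N) mod N \<notin> S" using no_gap Suc.IH by blast
    then show ?case by (simp add: mod_Suc_eq)
  qed (use t in simp)
  obtain s where s: "s \<in> S" using assms by auto
  then have "(t + (s + N - t)) mod N = s" using t assms(1) by auto
  then show False using outside[of "s + N - t"] s by simp
qed

text \<open>Every nonempty set of states is the image of all states under some word: remove the
  missing states one at a time by merging a missing state into a present successor.\<close>
lemma after_onto:
  assumes "S \<subseteq> {..<N}" "S \<noteq> {}"
  shows "\<exists>x. after \<delta> {..<N} x = S"
  using assms
proof (induction "card ({..<N} - S)" arbitrary: S)
  case 0
  then have "S = {..<N}" by auto
  then show ?case by (intro exI[of _ "[]"]) (simp add: after_def)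
next
  case (Suc k)
  then have "S \<noteq> {..<N}" by auto
  then obtain j where j: "j < N" "j \<notin> S" "Suc j mod N \<in> S" using exists_gap Suc.prems by blast
  have "{..<N} - insert j S = ({..<N} - S) - {j}" by auto
  then have "k = card ({..<N} - insert j S)" using Suc.hyps(2) j by (simp add: card_Diff_singleton)
  then obtain x where x: "after \<delta> {..<N} x = insert j S"
    using Suc.hyps(1)[of "insert j S"] Suc.prems j by auto
  have "after \<delta> {..<N} (x @ pulse j) = after \<delta> (insert j S) (pulse j)"
    unfolding after_append x ..
  also have "\<dots> = insert (Suc j mod N) S"
  proof -
    have "foldl \<delta> q (pulse j) = q" if "q \<in> S" for q
      using pulse_merge[of q j] that j Suc.prems(1) by auto
    then have "(\<lambda>q. foldl \<delta> q (pulse j)) ` S = S" by simp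
    then show ?thesis using pulse_merge[of j j] j by (simp add: after_def)
  qed
  also have "\<dots> = S" using j by auto
  finally show ?case ..
qed

definition lang :: "'a list set" where
  "lang = accepts \<delta> {0} {0}"

lemma quotients_lang: "quotients lang = (\<lambda>p. accepts \<delta> {0} {p}) ` {..<N}"
  unfolding lang_def quotients_accepts reachable ..

lemma kappa_lang: "kappa lang = N"
  using kappa_eq_card[OF quotients_lang inj_on_accepts_zero_state] by simp

lemma regular_lang: "regular lang"
  by (rule regular_if_finite_quotients) (simp add: quotients_lang)

lemma lang_no_empty: "\<not> has_empty lang"
  unfolding has_empty_def quotients_lang using accepts_zero_state_nonempty by auto

lemma range_after: "range (after \<delta> {..<N}) = Pow {..<N} - {{}}"
proof -
  have "after \<delta> {..<N} x \<in> Pow {..<N} - {{}}" for x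
    using run_lt two_le_N by (auto simp: after_def lessThan_empty_iff)
  then show ?thesis using after_onto by blast
qed

lemma kappa_suffix_closure_lang: "kappa (suffix_closure lang) = 2 ^ N - 1"
proof -
  have "quotients (suffix_closure lang) = accepts \<delta> {0} ` (Pow {..<N} - {{}})"
    unfolding quotients_range lang_def quot_suffix_closure_accepts reachable range_composition
      range_after ..
  then have "kappa (suffix_closure lang) = card (Pow {..<N} - {{}})"
    using inj_on_accepts_zero by (intro kappa_eq_card) (auto intro: inj_on_subset)
  also have "\<dots> = 2 ^ N - 1" by (simp add: card_Diff_singleton card_Pow)
  finally show ?thesis .
qed

end

section \<open>Tightness for the suffix closure with the empty quotient and for the factor closure\<close>

definition sink_step :: "'a \<Rightarrow> nat \<Rightarrow> nat \<Rightarrow> 'a \<Rightarrow> nat" where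
  "sink_step a m q c = (if m \<le> q then m else if c = a then Suc q mod m else if q = 0 then m else q)"

locale sink_automaton =
  fixes a b :: 'a and m :: nat
  assumes a_ne_b: "a \<noteq> b" and sink_pos: "0 < m"
begin

abbreviation "\<delta> \<equiv> sink_step a m"

sublocale rotation \<delta> a b m
  by unfold_locales (use a_ne_b sink_pos in \<open>auto simp: sink_step_def\<close>)

lemma run_le: "q \<le> m \<Longrightarrow> foldl \<delta> q w \<le> m"
proof (induction w arbitrary: q)
  case (Cons c w)
  then show ?case using sink_pos by (simp add: sink_step_def)
qed simp

lemma run_ge: "m \<le> q \<Longrightarrow> m \<le> foldl \<delta> q w"
  by (induction w arbitrary: q) (simp_all add: sink_step_def)

lemma sink: "foldl \<delta> m w = m"
  using run_le[of m w] run_ge[of m w] by simp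

lemma reachable: "range (foldl \<delta> 0) = {..m}"
proof
  show "range (foldl \<delta> 0) \<subseteq> {..m}" using run_le by auto
  show "{..m} \<subseteq> range (foldl \<delta> 0)"
  proof
    fix p assume "p \<in> {..m}"
    show "p \<in> range (foldl \<delta> 0)"
    proof (cases "p = m")
      case True
      have "foldl \<delta> 0 [b] = m" using a_ne_b sink_pos by (simp add: sink_step_def)
      then show ?thesis using True by (metis rangeI)
    next
      case False
      then have "foldl \<delta> 0 (replicate p a) = p" using \<open>p \<in> {..m}\<close> run_a[OF sink_pos] by simp
      then show ?thesis by (metis rangeI)
    qed
  qed
qed

lemma coreachable: "{q. \<exists>v. foldl \<delta> q v \<in> {0}} = {..<m}"
proof
  show "{q. \<exists>v. foldl \<delta> q v \<in> {0}} \<subseteq> {..<m}"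
  proof
    fix q assume "q \<in> {q. \<exists>v. foldl \<delta> q v \<in> {0}}"
    then obtain v where "foldl \<delta> q v = 0" by auto
    then show "q \<in> {..<m}" using run_ge[of q v] sink_pos by (cases "m \<le> q") auto
  qed
  show "{..<m} \<subseteq> {q. \<exists>v. foldl \<delta> q v \<in> {0}}"
    using home_zero by blast
qed

lemma pulse_kill: "q < m \<Longrightarrow> j < m \<Longrightarrow> foldl \<delta> q (pulse j) = (if q = j then m else q)"
  using pulse_other pulse_self sink a_ne_b sink_pos by (auto simp: sink_step_def)

lemma kill_set:
  assumes "D \<subseteq> {..<m}"
  shows "\<exists>x. \<forall>q<m. foldl \<delta> q x = (if q \<in> D then m else q)"
proof -
  have "finite D" using assms finite_subset by blast
  then show ?thesis using assms
  proof (induction D rule: finite_induct)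
    case empty
    show ?case by (intro exI[of _ "[]"]) simp
  next
    case (insert j D)
    then obtain x where x: "\<forall>q<m. foldl \<delta> q x = (if q \<in> D then m else q)" by auto
    have "foldl \<delta> q (x @ pulse j) = (if q \<in> insert j D then m else q)" if "q < m" for q
      using x that insert.prems pulse_kill sink by auto
    then show ?case by blast
  qed
qed

lemma after_kill:
  assumes "S \<subseteq> {..<m}"
  shows "\<exists>x. after \<delta> {..m} x = insert m S"
proof -
  obtain x where x: "\<forall>q<m. foldl \<delta> q x = (if q \<in> {..<m} - S then m else q)"
    using kill_set[of "{..<m} - S"] by blast
  have "{..m} = insert m {..<m}" by auto
  then have "after \<delta> {..m} x = insert m S" using x sink assms by (auto simp: after_def image_iff)
  then show ?thesis ..
qed

lemma accepts_insert_sink: "m \<notin> F \<Longrightarrow> accepts \<delta> F (insert m T) = accepts \<delta> F T"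
  unfolding accepts_def using sink by auto

lemma range_accepts_after:
  assumes "m \<notin> F"
  shows "range (\<lambda>x. accepts \<delta> F (after \<delta> {..m} x)) = accepts \<delta> F ` Pow {..<m}"
proof -
  have "accepts \<delta> F (after \<delta> {..m} x) = accepts \<delta> F (after \<delta> {..m} x - {m})" for x
    using accepts_insert_sink[OF assms, of "after \<delta> {..m} x - {m}"] sink
    by (metis after_def atMost_iff image_eqI insert_Diff order_refl)
  moreover have "after \<delta> {..m} x - {m} \<in> Pow {..<m}" for x
  proof -
    have "after \<delta> {..m} x \<subseteq> {..m}" using run_le by (auto simp: after_def)
    then show ?thesis by auto
  qed
  moreover have "accepts \<delta> F S \<in> range (\<lambda>x. accepts \<delta> F (after \<delta> {..m} x))" if "S \<subseteq> {..<m}" for S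
    using after_kill[OF that] accepts_insert_sink[OF assms, of S] by (metis rangeI)
  ultimately show ?thesis by blast
qed

lemma select_state:
  assumes "i < m"
  shows "\<exists>y. \<forall>q\<in>{..<m}. foldl \<delta> q y \<in> {..<m} \<longleftrightarrow> q = i"
proof -
  obtain y where "\<forall>q<m. foldl \<delta> q y = (if q \<in> {..<m} - {i} then m else q)"
    using kill_set[of "{..<m} - {i}"] by blast
  then show ?thesis using assms by (intro exI[of _ y]) auto
qed

definition lang :: "'a list set" where
  "lang = accepts \<delta> {0} {0}"

lemma quotients_lang: "quotients lang = insert {} ((\<lambda>p. accepts \<delta> {0} {p}) ` {..<m})"
proof -
  have "accepts \<delta> {0} {m} = {}" using sink sink_pos by (auto simp: accepts_def)
  moreover have "{..m} = insert m {..<m}" by auto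
  ultimately show ?thesis unfolding lang_def quotients_accepts reachable by simp
qed

lemma kappa_lang: "kappa lang = Suc m"
proof -
  have "{} \<notin> (\<lambda>p. accepts \<delta> {0} {p}) ` {..<m}" using accepts_zero_state_nonempty by auto
  then show ?thesis unfolding kappa_def quotients_lang
    using card_image[OF inj_on_accepts_zero_state] by simp
qed

lemma regular_lang: "regular lang"
  by (rule regular_if_finite_quotients) (simp add: quotients_lang)

lemma lang_has_empty: "has_empty lang"
  unfolding has_empty_def quotients_lang by simp

lemma kappa_suffix_closure_lang: "kappa (suffix_closure lang) = 2 ^ m"
proof -
  have "quotients (suffix_closure lang) = accepts \<delta> {0} ` Pow {..<m}"
    unfolding quotients_range lang_def quot_suffix_closure_accepts reachable
    using range_accepts_after[of "{0}"] sink_pos by simp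
  then show ?thesis using kappa_eq_card[OF _ inj_on_accepts_zero] by (simp add: card_Pow)
qed

lemma kappa_factor_closure_lang: "kappa (factor_closure lang) = 2 ^ m"
proof -
  have quotients: "quotients (factor_closure lang) = accepts \<delta> {..<m} ` Pow {..<m}"
    unfolding quotients_range quot_factor_closure lang_def quot_suffix_closure_accepts reachable
      prefix_closure_accepts coreachable
    using range_accepts_after[of "{..<m}"] by simp
  have "inj_on (accepts \<delta> {..<m}) (Pow {..<m})"
    using select_state by (intro inj_on_accepts) blast
  then show ?thesis using kappa_eq_card[OF quotients] by (simp add: card_Pow)
qed

end

section \<open>Tightness for the prefix closure\<close>

definition shorter_than :: "nat \<Rightarrow> 'a list set" where
  "shorter_than k = {w. length w < k}"

lemma quot_shorter_than: "quot (shorter_than k) w = shorter_than (k - length w)"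
  unfolding quot_def shorter_than_def by auto

lemma quotients_shorter_than: "quotients (shorter_than k :: 'a list set) = shorter_than ` {..k}"
proof -
  have "shorter_than j \<in> quotients (shorter_than k :: 'a list set)" if "j \<le> k" for j
    using quot_in[of "shorter_than k" "replicate (k - j) (undefined :: 'a)"] that
    by (simp add: quot_shorter_than)
  then show ?thesis unfolding quotients_range quot_shorter_than by force
qed

lemma inj_shorter_than: "inj (shorter_than :: nat \<Rightarrow> 'a list set)"
proof (rule injI)
  fix i j :: nat assume eq: "(shorter_than i :: 'a list set) = shorter_than j"
  have "replicate l (undefined :: 'a) \<in> shorter_than k \<longleftrightarrow> l < k" for k l
    unfolding shorter_than_def by simp
  then show "i = j" using eq by (metis less_irrefl linorder_neqE_nat)
qed

lemma kappa_shorter_than: "kappa (shorter_than k :: 'a list set) = Suc k"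
  using kappa_eq_card[OF quotients_shorter_than inj_on_subset[OF inj_shorter_than]] by simp

lemma regular_shorter_than: "regular (shorter_than k)"
  by (rule regular_if_finite_quotients) (simp add: quotients_shorter_than)

lemma prefix_closure_shorter_than: "prefix_closure (shorter_than k) = shorter_than k"
  unfolding prefix_closure_def closure_def shorter_than_def
  by (auto dest: prefix_length_le)

section \<open>Tightness for the subword closure\<close>

lemma quotients_Nil_lang: "quotients ({[]} :: 'a list set) = {{[]}, {}}"
proof -
  have "quot {[]} w = (if w = [] then {[]} else {})" for w :: "'a list"
    unfolding quot_def by auto
  then show ?thesis unfolding quotients_range by (auto intro: rangeI[of _ "[undefined]"])
qed

locale letter_set =
  fixes A :: "'a set"
  assumes finite_A: "finite A" and A_nonempty: "A \<noteq> {}"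
begin

definition lang :: "'a list set" where
  "lang = {c # w | c w. c \<in> A \<and> c \<notin> set w}"

definition avoiding :: "'a \<Rightarrow> 'a list set" where
  "avoiding c = {y. c \<notin> set y}"

lemma quot_lang_Cons: "quot lang (c # w) = (if c \<in> A \<and> c \<notin> set w then avoiding c else {})"
  unfolding quot_def lang_def avoiding_def by auto

lemma quotients_lang: "quotients lang = insert lang (insert {} (avoiding ` A))"
proof
  show "quotients lang \<subseteq> insert lang (insert {} (avoiding ` A))"
  proof
    fix K assume "K \<in> quotients lang"
    then obtain w where "K = quot lang w" unfolding quotients_range by auto
    then show "K \<in> insert lang (insert {} (avoiding ` A))"
      by (cases w) (auto simp: quot_lang_Cons)
  qed
  obtain c0 where c0: "c0 \<in> A" using A_nonempty by auto
  have "quot lang [c0, c0] = {}" "quot lang [c] = avoiding c" if "c \<in> A" for c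
    using c0 that by (auto simp: quot_lang_Cons)
  then show "insert lang (insert {} (avoiding ` A)) \<subseteq> quotients lang"
    using quot_in[of lang] quot_Nil[of lang] c0 by (metis image_subset_iff insert_subset)
qed

lemma kappa_lang: "kappa lang = card A + 2"
proof -
  have Nil_avoiding: "[] \<in> avoiding c" for c unfolding avoiding_def by simp
  have "inj_on avoiding A"
  proof (rule inj_onI)
    fix c d assume "avoiding c = avoiding d"
    moreover have "[c] \<notin> avoiding c" by (simp add: avoiding_def)
    ultimately have "[c] \<notin> avoiding d" by simp
    then show "c = d" by (simp add: avoiding_def)
  qed
  moreover obtain c0 where "c0 \<in> A" using A_nonempty by auto
  then have "[c0] \<in> lang" "[] \<notin> lang" unfolding lang_def by auto
  ultimately show ?thesis
    using Nil_avoiding finite_A unfolding kappa_def quotients_lang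
    by (auto simp: card_image card_insert_if)
qed

lemma regular_lang: "regular lang"
  by (rule regular_if_finite_quotients) (simp add: quotients_lang finite_A)

definition missing :: "'a set \<Rightarrow> 'a list set" where
  "missing B = {y. \<exists>d\<in>B. d \<notin> set y}"

lemma quot_subword_closure_lang_Cons: "quot (subword_closure lang) (c # x) = missing (A - set x)"
proof -
  have "(\<exists>w\<in>lang. subseq (c # x @ y) w) \<longleftrightarrow> (\<exists>d\<in>A. d \<notin> set x \<and> d \<notin> set y)" for y
  proof
    assume "\<exists>w\<in>lang. subseq (c # x @ y) w"
    then obtain d w' where d: "d \<in> A" "d \<notin> set w'" "subseq (c # x @ y) (d # w')"
      unfolding lang_def by auto
    then have "subseq (x @ y) w'" by (cases "c = d") (auto dest: subseq_Cons')
    then have "set (x @ y) \<subseteq> set w'" by (auto elim: list_emb_set)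
    then show "\<exists>d\<in>A. d \<notin> set x \<and> d \<notin> set y" using d by auto
  next
    assume "\<exists>d\<in>A. d \<notin> set x \<and> d \<notin> set y"
    then obtain d where d: "d \<in> A" "d \<notin> set x" "d \<notin> set y" by blast
    then have "d # c # x @ y \<in> lang \<or> (c = d \<and> c # x @ y \<in> lang)"
      unfolding lang_def by auto
    then show "\<exists>w\<in>lang. subseq (c # x @ y) w" by auto
  qed
  then show ?thesis unfolding quot_def subword_closure_def closure_def missing_def by auto
qed

lemma inj_missing: "inj_on missing (Pow A)"
  unfolding missing_def
proof (rule inj_on_separated_unions)
  fix i assume "i \<in> A"
  obtain ys where "set ys = A - {i}" using finite_list finite_A by blast
  then show "\<exists>y. \<forall>q\<in>A. q \<notin> set y \<longleftrightarrow> q = i" using \<open>i \<in> A\<close> by auto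
qed

lemma quotients_subword_closure_lang:
  "quotients (subword_closure lang) = insert (subword_closure lang) (missing ` Pow A)"
proof
  show "quotients (subword_closure lang) \<subseteq> insert (subword_closure lang) (missing ` Pow A)"
  proof
    fix K assume "K \<in> quotients (subword_closure lang)"
    then obtain w where "K = quot (subword_closure lang) w" unfolding quotients_range by auto
    then show "K \<in> insert (subword_closure lang) (missing ` Pow A)"
      by (cases w) (auto simp: quot_subword_closure_lang_Cons)
  qed
  have "missing B \<in> quotients (subword_closure lang)" if "B \<subseteq> A" for B
  proof -
    obtain xs where "set xs = A - B" using finite_list finite_A by blast
    then have "quot (subword_closure lang) (undefined # xs) = missing B"
      using that by (simp add: quot_subword_closure_lang_Cons double_diff)
    then show ?thesis using quot_in by metis
  qed
  then show "insert (subword_closure lang) (missing ` Pow A) \<subseteq> quotients (subword_closure lang)"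
    using quot_in[of "subword_closure lang" "[]"] by auto
qed

lemma kappa_subword_closure_lang: "kappa (subword_closure lang) = 2 ^ card A + 1"
proof -
  obtain c0 where c0: "c0 \<in> A" using A_nonempty by auto
  obtain ys where ys: "set ys = A - {c0}" using finite_list finite_A by blast
  have "c0 # ys \<in> subword_closure lang"
    unfolding subword_closure_def closure_def lang_def using c0 ys by auto
  moreover have "c0 # ys \<notin> missing B" if "B \<subseteq> A" for B
    unfolding missing_def using that ys c0 by auto
  ultimately have "subword_closure lang \<notin> missing ` Pow A" by auto
  then show ?thesis unfolding kappa_def quotients_subword_closure_lang
    using finite_A card_image[OF inj_missing] by (simp add: card_Pow)
qed

end

text \<open>The five upper bounds; only finiteness of the set of quotients is used, regularity is not.\<close>
lemma closure_upper_bounds: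
  assumes "kappa L = n" "2 \<le> n"
  shows "kappa (prefix_closure L) \<le> n \<and>
      (\<not> has_empty L \<longrightarrow> kappa (suffix_closure L) \<le> 2^n - 1) \<and>
      (has_empty L \<longrightarrow> kappa (suffix_closure L) \<le> 2^(n-1)) \<and>
      kappa (factor_closure L) \<le> 2^(n-1) \<and>
      kappa (subword_closure L) \<le> 2^(n-2) + 1"
proof -
  have fin: "finite (quotients L)" using assms by (intro finite_quotients) simp
  show ?thesis
    unfolding assms(1)[symmetric]
    using prefix_closure_kappa_le[OF fin] suffix_closure_kappa_le[OF fin]
      suffix_closure_kappa_le_has_empty[OF fin] factor_closure_kappa_le[OF fin]
      subword_closure_kappa_le[OF fin] assms by simp
qed

lemma prefix_closure_tight:
  assumes "1 \<le> n"
  shows "\<exists>L::'a list set. regular L \<and> kappa L = n \<and> kappa (prefix_closure L) = n"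
  using assms
  by (intro exI[of _ "shorter_than (n - 1)"])
    (simp add: regular_shorter_than kappa_shorter_than prefix_closure_shorter_than)

lemma suffix_closure_tight:
  fixes a b :: 'a
  assumes "a \<noteq> b" "2 \<le> n"
  shows "\<exists>L::'a list set. regular L \<and> kappa L = n \<and> \<not> has_empty L \<and>
           kappa (suffix_closure L) = 2^n - 1"
proof -
  interpret cycle_automaton a b n using assms by unfold_locales
  show ?thesis using regular_lang kappa_lang lang_no_empty kappa_suffix_closure_lang by blast
qed

lemma suffix_closure_tight_has_empty:
  fixes a b :: 'a
  assumes "a \<noteq> b" "2 \<le> n"
  shows "\<exists>L::'a list set. regular L \<and> kappa L = n \<and> has_empty L \<and>
           kappa (suffix_closure L) = 2^(n-1)"
proof -
  interpret sink_automaton a b "n - 1" using assms by unfold_locales simp_all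
  show ?thesis using regular_lang kappa_lang lang_has_empty kappa_suffix_closure_lang assms(2)
    by (intro exI[of _ lang]) simp
qed

lemma factor_closure_tight:
  fixes a b :: 'a
  assumes "a \<noteq> b" "2 \<le> n"
  shows "\<exists>L::'a list set. regular L \<and> kappa L = n \<and> kappa (factor_closure L) = 2^(n-1)"
proof -
  interpret sink_automaton a b "n - 1" using assms by unfold_locales simp_all
  show ?thesis using regular_lang kappa_lang kappa_factor_closure_lang assms(2)
    by (intro exI[of _ lang]) simp
qed

lemma subword_closure_tight:
  assumes "2 \<le> n" "n - 2 \<le> card (UNIV :: 'a set)"
  shows "\<exists>L::'a list set. regular L \<and> kappa L = n \<and> kappa (subword_closure L) = 2^(n-2) + 1"
proof (cases "n = 2")
  case True
  have "subword_closure {[]} = ({[]} :: 'a list set)" unfolding subword_closure_def closure_def by auto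
  moreover have "kappa ({[]} :: 'a list set) = 2" unfolding kappa_def quotients_Nil_lang by simp
  moreover have "regular ({[]} :: 'a list set)"
    by (rule regular_if_finite_quotients) (simp add: quotients_Nil_lang)
  ultimately show ?thesis using True by (intro exI[of _ "{[]}"]) simp
next
  case False
  obtain A :: "'a set" where A: "card A = n - 2" "finite A"
    using obtain_subset_with_card_n[OF assms(2)] by metis
  then have "A \<noteq> {}" using False assms(1) by auto
  then interpret letter_set A using A by unfold_locales
  show ?thesis using regular_lang kappa_lang kappa_subword_closure_lang A assms(1)
    by (intro exI[of _ lang]) simp
qed

lemma two_letters:
  assumes "2 \<le> card (UNIV :: 'a set)"
  obtains a b :: 'a where "a \<noteq> b"
proof -
  obtain T :: "'a set" where "card T = 2" using obtain_subset_with_card_n[OF assms] by metis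
  then show ?thesis using that by (auto simp: card_2_iff)
qed

theorem theorem1:
  shows
  "(\<forall>(L::'a::finite list set) n. regular L \<and> kappa L = n \<and> n \<ge> 2 \<longrightarrow>
      kappa (prefix_closure L) \<le> n \<and>
      (\<not> has_empty L \<longrightarrow> kappa (suffix_closure L) \<le> 2^n - 1) \<and>
      (has_empty L \<longrightarrow> kappa (suffix_closure L) \<le> 2^(n-1)) \<and>
      kappa (factor_closure L) \<le> 2^(n-1) \<and>
      kappa (subword_closure L) \<le> 2^(n-2) + 1)
   \<and> (card (UNIV::'a set) \<ge> 2 \<longrightarrow> (\<forall>n\<ge>2.
      (\<exists>L::'a list set. regular L \<and> kappa L = n \<and> kappa (prefix_closure L) = n) \<and>
      (\<exists>L::'a list set. regular L \<and> kappa L = n \<and> \<not> has_empty L \<and>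
          kappa (suffix_closure L) = 2^n - 1) \<and>
      (\<exists>L::'a list set. regular L \<and> kappa L = n \<and> has_empty L \<and>
          kappa (suffix_closure L) = 2^(n-1)) \<and>
      (\<exists>L::'a list set. regular L \<and> kappa L = n \<and> kappa (factor_closure L) = 2^(n-1))))
   \<and> (\<forall>n\<ge>2. card (UNIV::'a set) \<ge> max (n-2) 2 \<longrightarrow>
      (\<exists>L::'a list set. regular L \<and> kappa L = n \<and> kappa (subword_closure L) = 2^(n-2) + 1))"
  apply (intro conjI)
  subgoal using closure_upper_bounds by blast
  subgoal
  proof (intro impI allI)
    fix n :: nat
    assume card: "2 \<le> card (UNIV :: 'a set)" and n: "2 \<le> n"
    obtain a b :: 'a where ab: "a \<noteq> b" using two_letters[OF card] .
    have "1 \<le> n" using n by simp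
    then show "(\<exists>L::'a list set. regular L \<and> kappa L = n \<and> kappa (prefix_closure L) = n) \<and>
      (\<exists>L::'a list set. regular L \<and> kappa L = n \<and> \<not> has_empty L \<and>
          kappa (suffix_closure L) = 2^n - 1) \<and>
      (\<exists>L::'a list set. regular L \<and> kappa L = n \<and> has_empty L \<and>
          kappa (suffix_closure L) = 2^(n-1)) \<and>
      (\<exists>L::'a list set. regular L \<and> kappa L = n \<and> kappa (factor_closure L) = 2^(n-1))"
      using prefix_closure_tight[OF \<open>1 \<le> n\<close>, where 'a='a] suffix_closure_tight[OF ab n]
        suffix_closure_tight_has_empty[OF ab n] factor_closure_tight[OF ab n] by blast
  qed
  subgoal using subword_closure_tight[where 'a='a] by simp
  done

end
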